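(* Let $0<\epsilon<M$ and let $t=(x=a+z^2,\ y=\sum_{k\ge0}b_kz^k)$ where $\sum_kb_kz^k$ converges for $|z|<\bar M$ for some $\bar M>M$ and $|a|<\min(\bar M^2-M^2,\epsilon^2)$. Put $\Phi(t):=z\,d(z^2)-\exp\big(-a\mathcal{L}_{\frac{1}{2z}\partial_z}\big)\big(y\,d(z^2)\big)$. Then $\Phi(t)\in W^{\epsilon,M}_{Airy}$ and for all integers $m,n\ge0$, $\mathrm{Res}_{z=0}\Big(\big(z-\tfrac{\Phi(t)}{2z\,dz}\big)^mz^{2n}d(z^2)\Big)=0$; in particular $\Phi(t)$ satisfies all residue constraints $(H_{Airy})_i(\Phi(t))=0$, $i\ge1$.
   Context: $W^{\epsilon,M}_{Airy}$: Laurent series $\sum_{k\ne0}\xi_kz^k\frac{dz}{z}$ (no $dz/z$ term) converging on an annulus $\bar\epsilon<|z|<\bar M$ with $\bar\epsilon<\epsilon<M<\bar M$. $\mathcal{L}_{\frac{1}{2z}\partial_z}$ is the Lie derivative along $\frac{1}{2z}\partial_z$ and $\exp(a\mathcal{L})=\sum_m\frac{a^m}{m!}\mathcal{L}^m$ (so $\exp(a\mathcal{L}_{\frac1{2z}\partial_z})(f(z)dz)=f(\sqrt{z^2+a})\,d\sqrt{z^2+a}$ for small $|a|$). Residues are coefficients of $dz/z$ in the Laurent expansion on $\epsilon<|z|<M$. The residue constraints: $(H_{Airy})_{2n}(w)=\mathrm{Res}((z-\frac{w}{2zdz})z^{2n}d(z^2))$, $(H_{Airy})_{2n-1}(w)=\frac12\mathrm{Res}((z-\frac{w}{2zdz})^2z^{2n-2}d(z^2))$,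 $n\ge1$. *)

theory Defs
  imports "HOL-Complex_Analysis.Complex_Analysis"
begin

text \<open>A meromorphic 1-form \<open>\<phi>(z) dz\<close> is represented by its coefficient function \<open>\<phi>\<close>.\<close>

text \<open>Lie derivative along the vector field \<open>1/(2z) \<partial>_z\<close> acting on \<open>f(z) dz\<close>:
  by Cartan's formula \<open>L_v(f dz) = d(\<iota>_v (f dz)) = d(f/(2z))\<close>.\<close>
definition lie_Airy :: "(complex \<Rightarrow> complex) \<Rightarrow> complex \<Rightarrow> complex" where
  "lie_Airy f = (\<lambda>z. deriv (\<lambda>w. f w / (2 * w)) z)"

definition exp_lie_Airy :: "complex \<Rightarrow> (complex \<Rightarrow> complex) \<Rightarrow> complex \<Rightarrow> complex" where
  "exp_lie_Airy a f = (\<lambda>z. \<Sum>m. (a ^ m / fact m) * (lie_Airy ^^ m) f z)"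

text \<open>\<open>\<Phi>(t) = z d(z^2) - exp(-a L)(y d(z^2))\<close> with \<open>y = \<Sum> b_k z^k\<close>; as coefficient of dz.\<close>
definition Phi_Airy :: "complex \<Rightarrow> (nat \<Rightarrow> complex) \<Rightarrow> complex \<Rightarrow> complex" where
  "Phi_Airy a b = (\<lambda>z. 2 * z ^ 2
      - exp_lie_Airy (- a) (\<lambda>w. 2 * w * (\<Sum>k. b k * w ^ k)) z)"

definition W_Airy :: "real \<Rightarrow> real \<Rightarrow> (complex \<Rightarrow> complex) \<Rightarrow> bool" where
  "W_Airy \<epsilon> M \<phi> \<longleftrightarrow> (\<exists>\<epsilon>' M' (\<xi>::int \<Rightarrow> complex). 0 \<le> \<epsilon>' \<and> \<epsilon>' < \<epsilon> \<and> M < M' \<and> \<xi> 0 = 0 \<and>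
      (\<forall>z. \<epsilon>' < norm z \<and> norm z < M' \<longrightarrow>
           ((\<lambda>k. \<xi> k * z powi k / z) has_sum \<phi> z) UNIV))"

text \<open>Residue of the form \<open>g(z) dz\<close> on the annulus \<open>\<epsilon> < |z| < M\<close>: coefficient of \<open>dz/z\<close>
  of its Laurent expansion there, computed as \<open>(2\<pi>i)^{-1} \<oint>_{|z|=r} g\<close>, \<open>r = (\<epsilon>+M)/2\<close>.\<close>
definition res_Airy :: "real \<Rightarrow> real \<Rightarrow> (complex \<Rightarrow> complex) \<Rightarrow> complex" where
  "res_Airy \<epsilon> M g = contour_integral (circlepath 0 ((\<epsilon> + M) / 2)) g / (2 * pi * \<i>)"

text \<open>The form \<open>(z - w/(2z dz))^m z^{2n} d(z^2)\<close> as coefficient of dz.\<close>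
definition form_Airy :: "(complex \<Rightarrow> complex) \<Rightarrow> nat \<Rightarrow> nat \<Rightarrow> complex \<Rightarrow> complex" where
  "form_Airy w m n = (\<lambda>z. (z - w z / (2 * z)) ^ m * z ^ (2 * n) * (2 * z))"

definition H_Airy :: "real \<Rightarrow> real \<Rightarrow> nat \<Rightarrow> (complex \<Rightarrow> complex) \<Rightarrow> complex" where
  "H_Airy \<epsilon> M i w = (if even i then res_Airy \<epsilon> M (form_Airy w 1 (i div 2))
                     else res_Airy \<epsilon> M (form_Airy w 2 ((i + 1) div 2 - 1)) / 2)"

end

theory Submission
  imports Defs
begin

text \<open>
  On forms \<open>g(w\<^sup>2) d(w\<^sup>2)\<close> the Lie derivative along \<open>1/(2w) \<partial>\<^sub>w\<close> is differentiation in
  \<open>u = w\<^sup>2\<close>, so \<open>exp(-a L)\<close> is the Taylor shift \<open>u \<mapsto> u - a\<close>. On the annulus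
  \<open>|a| < |z|\<^sup>2\<close>, \<open>|z|\<^sup>2 + |a| < Mbar\<^sup>2\<close> this gives \<open>\<Phi>(t) = (2z\<^sup>2 - 2z y(s)) dz\<close> with the branch
  \<open>s = z (1 - a/z\<^sup>2)\<^sup>1\<^sup>/\<^sup>2\<close> of \<open>(z\<^sup>2 - a)\<^sup>1\<^sup>/\<^sup>2\<close>, hence
  \<open>(z - \<Phi>/(2z dz))\<^sup>m z\<^sup>2\<^sup>n 2z dz = y(s)\<^sup>m (s\<^sup>2 + a)\<^sup>n 2s ds\<close> is exact and all residues vanish.
  Splitting \<open>y(s) = y\<^sub>e(s\<^sup>2) + s y\<^sub>o(s\<^sup>2)\<close> into even and odd parts writes \<open>\<Phi>\<close> as \<open>2z\<^sup>2\<close> plus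
  \<open>z\<close> times a series in \<open>z\<^sup>2\<close> plus \<open>z\<^sup>2\<close> times a series in \<open>z\<^sup>2\<close> and \<open>a/z\<^sup>2\<close>: an
  absolutely convergent Laurent series in which only even exponents and odd exponents \<open>\<ge> 1\<close>
  occur, so there is no \<open>dz/z\<close> term.
\<close>

section \<open>Power series\<close>

lemma summable_norm_powser_inside:
  fixes c :: "nat \<Rightarrow> complex"
  assumes "\<And>u. norm u < R \<Longrightarrow> summable (\<lambda>k. c k * u ^ k)" and "norm z < R"
  shows "summable (\<lambda>k. norm (c k * z ^ k))"
proof -
  define z' :: complex where "z' = of_real ((norm z + R) / 2)"
  have "0 \<le> norm z + R"
    using assms(2) norm_ge_zero[of z] by linarith
  then have "norm z' = (norm z + R) / 2"
    unfolding z'_def norm_of_real by simp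
  then have "norm z' < R" "norm z < norm z'"
    using assms(2) by auto
  then show ?thesis
    using powser_insidea[of c z' z] assms(1) by blast
qed

lemma holomorphic_on_ball_powser:
  fixes c :: "nat \<Rightarrow> complex"
  assumes "\<And>u. norm u < R \<Longrightarrow> summable (\<lambda>k. c k * u ^ k)"
  shows "(\<lambda>u. \<Sum>k. c k * u ^ k) holomorphic_on ball 0 R"
proof -
  have "ereal R \<le> fps_conv_radius (Abs_fps c)"
    unfolding fps_conv_radius_def by (rule conv_radius_geI_ex') (use assms in auto)
  then have "ball 0 R \<subseteq> eball 0 (fps_conv_radius (Abs_fps c))"
    by (auto simp: eball_def intro!: less_le_trans[OF _ \<open>ereal R \<le> _\<close>])
  then have "eval_fps (Abs_fps c) holomorphic_on ball 0 R"
    by (rule holomorphic_on_eval_fps)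
  then show ?thesis
    by (simp add: eval_fps_def[abs_def])
qed

lemma has_sum_taylor_holomorphic_on_ball:
  fixes f :: "complex \<Rightarrow> complex"
  assumes "f holomorphic_on ball 0 r" and "norm w < r"
  shows "((\<lambda>n. (deriv ^^ n) f 0 / fact n * w ^ n) has_sum f w) UNIV"
proof -
  have "(\<lambda>n. (deriv ^^ n) f 0 / fact n * u ^ n) sums f u" if "norm u < r" for u
    using holomorphic_power_series[OF assms(1), of u] that by simp
  then show ?thesis
    using assms(2) by (intro norm_summable_imp_has_sum summable_norm_powser_inside) (auto simp: sums_iff)
qed

lemma holomorphic_on_ball_translate:
  assumes "f holomorphic_on ball 0 R"
  shows "(\<lambda>u. f (u - a)) holomorphic_on ball 0 (R - norm a)"
proof -
  have "norm (u - a) < R" if "norm u < R - norm a" for u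
    using norm_triangle_ineq4[of u a] that by linarith
  then have "(\<lambda>u. u - a) ` ball 0 (R - norm a) \<subseteq> ball 0 R"
    by auto
  moreover have "(\<lambda>u. u - a) holomorphic_on ball 0 (R - norm a)"
    by (intro holomorphic_intros)
  ultimately show ?thesis
    using holomorphic_on_compose_gen[OF _ assms] by (simp add: o_def)
qed

lemma summable_powser_even_odd:
  fixes b :: "nat \<Rightarrow> complex"
  assumes b: "\<And>z. norm z < R \<Longrightarrow> summable (\<lambda>k. b k * z ^ k)" and R: "0 < R"
    and u: "norm u < R\<^sup>2"
  shows "summable (\<lambda>k. b (2 * k) * u ^ k)" and "summable (\<lambda>k. b (2 * k + 1) * u ^ k)"
proof -
  define t where "t = sqrt ((norm u + R\<^sup>2) / 2)"
  have t2: "t\<^sup>2 = (norm u + R\<^sup>2) / 2"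
    unfolding t_def by (simp add: add_nonneg_nonneg)
  have t: "0 < t"
    using R by (simp add: t_def add_nonneg_pos)
  have u_t: "norm u < norm (complex_of_real (t\<^sup>2))"
    using t2 u by (simp add: norm_power)
  have "t\<^sup>2 < R\<^sup>2"
    using t2 u by simp
  then have "norm (complex_of_real t) < R"
    using R t by (simp add: power_less_imp_less_base)
  then have summable: "(\<lambda>k. b k * complex_of_real t ^ k) summable_on UNIV"
    by (intro norm_summable_imp_summable_on summable_norm_powser_inside[OF b])
  have sub: "(\<lambda>k. b (g k) * complex_of_real t ^ g k) summable_on UNIV" if "inj g" for g :: "nat \<Rightarrow> nat"
    using summable_on_subset_banach[OF summable, of "range g"]
      summable_on_reindex[OF that, of "\<lambda>k. b k * complex_of_real t ^ k"] by (simp add: o_def)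
  have "(\<lambda>k. b (2 * k) * complex_of_real t ^ (2 * k)) summable_on UNIV"
    by (rule sub) (auto simp: inj_def)
  then have even: "summable (\<lambda>k. b (2 * k) * complex_of_real (t\<^sup>2) ^ k)"
    by (simp add: power_mult summable_on_imp_summable)
  have "(\<lambda>k. b (2 * k + 1) * complex_of_real t ^ (2 * k + 1)) summable_on UNIV"
    by (rule sub) (auto simp: inj_def)
  moreover have "(\<lambda>k. b (2 * k + 1) * complex_of_real t ^ (2 * k + 1))
      = (\<lambda>k. complex_of_real t * (b (2 * k + 1) * complex_of_real (t\<^sup>2) ^ k))"
    by (simp add: fun_eq_iff power_mult power_add)
  ultimately have "summable (\<lambda>k. complex_of_real t * (b (2 * k + 1) * complex_of_real (t\<^sup>2) ^ k))"
    by (metis summable_on_imp_summable)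
  then have odd: "summable (\<lambda>k. b (2 * k + 1) * complex_of_real (t\<^sup>2) ^ k)"
    using t by simp
  show "summable (\<lambda>k. b (2 * k) * u ^ k)"
    using powser_insidea[OF even u_t] by (rule summable_norm_cancel)
  show "summable (\<lambda>k. b (2 * k + 1) * u ^ k)"
    using powser_insidea[OF odd u_t] by (rule summable_norm_cancel)
qed

definition powser_even :: "(nat \<Rightarrow> complex) \<Rightarrow> complex \<Rightarrow> complex" where
  "powser_even b u = (\<Sum>k. b (2 * k) * u ^ k)"

definition powser_odd :: "(nat \<Rightarrow> complex) \<Rightarrow> complex \<Rightarrow> complex" where
  "powser_odd b u = (\<Sum>k. b (2 * k + 1) * u ^ k)"

lemma
  fixes b :: "nat \<Rightarrow> complex"
  assumes "\<And>z. norm z < R \<Longrightarrow> summable (\<lambda>k. b k * z ^ k)" and "0 < R"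
  shows holomorphic_on_powser_even: "powser_even b holomorphic_on ball 0 (R\<^sup>2)"
    and holomorphic_on_powser_odd: "powser_odd b holomorphic_on ball 0 (R\<^sup>2)"
  unfolding powser_even_def[abs_def] powser_odd_def[abs_def]
  using summable_powser_even_odd[OF assms] by (auto intro!: holomorphic_on_ball_powser)

lemma powser_even_odd_split:
  fixes b :: "nat \<Rightarrow> complex"
  assumes b: "\<And>z. norm z < R \<Longrightarrow> summable (\<lambda>k. b k * z ^ k)" and s: "norm s < R"
  shows "(\<Sum>k. b k * s ^ k) = powser_even b (s\<^sup>2) + s * powser_odd b (s\<^sup>2)"
proof -
  have R: "0 < R"
    using s norm_ge_zero[of s] by linarith
  have s2: "norm (s\<^sup>2) < R\<^sup>2"
    using s by (simp add: norm_power power_strict_mono)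
  define fe where "fe n = (if even n then b n * s ^ n else 0)" for n
  define fo where "fo n = (if odd n then b n * s ^ n else 0)" for n
  have "(\<lambda>k. fe (2 * k)) sums powser_even b (s\<^sup>2)"
    using summable_powser_even_odd(1)[OF b R s2]
    by (simp add: powser_even_def fe_def power_mult summable_sums)
  then have fe: "fe sums powser_even b (s\<^sup>2)"
    by (subst (asm) sums_mono_reindex) (auto simp: strict_mono_def fe_def elim!: evenE)
  have "(\<lambda>k. s * (b (2 * k + 1) * (s\<^sup>2) ^ k)) sums (s * powser_odd b (s\<^sup>2))"
    using summable_powser_even_odd(2)[OF b R s2]
    by (intro sums_mult) (simp add: powser_odd_def summable_sums)
  moreover have "(\<lambda>k. fo (2 * k + 1)) = (\<lambda>k. s * (b (2 * k + 1) * (s\<^sup>2) ^ k))"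
    by (auto simp: fo_def power_mult fun_eq_iff)
  ultimately have "(\<lambda>k. fo (2 * k + 1)) sums (s * powser_odd b (s\<^sup>2))"
    by simp
  then have fo: "fo sums (s * powser_odd b (s\<^sup>2))"
    by (subst (asm) sums_mono_reindex) (auto simp: strict_mono_def fo_def elim!: oddE)
  have "(\<lambda>n. b n * s ^ n) = (\<lambda>n. fe n + fo n)"
    by (auto simp: fe_def fo_def fun_eq_iff)
  then show ?thesis
    using sums_unique[OF sums_add[OF fe fo]] by simp
qed

lemma Re_pos_if_norm_diff_1_less:
  fixes w :: complex
  assumes "norm (w - 1) < 1"
  shows "0 < Re w"
  using abs_Re_le_cmod[of "w - 1"] assms by auto

lemma holomorphic_on_csqrt_one_minus: "(\<lambda>w. csqrt (1 - w)) holomorphic_on ball 0 1"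
proof -
  have "1 - w \<notin> \<real>\<^sub>\<le>\<^sub>0" if "norm w < 1" for w :: complex
    using Re_pos_if_norm_diff_1_less[of "1 - w"] that by (auto simp: complex_nonpos_Reals_iff)
  then show ?thesis
    by (intro holomorphic_intros) auto
qed

lemma holomorphic_on_csqrt_div:
  fixes z :: complex
  assumes "z \<noteq> 0"
  shows "(\<lambda>u. z * csqrt (u / z\<^sup>2)) holomorphic_on ball (z\<^sup>2) ((norm z)\<^sup>2)"
proof -
  have "0 < Re (u / z\<^sup>2)" if "dist (z\<^sup>2) u < (norm z)\<^sup>2" for u
  proof (rule Re_pos_if_norm_diff_1_less)
    have "u / z\<^sup>2 - 1 = (u - z\<^sup>2) / z\<^sup>2"
      using assms by (simp add: field_simps)
    then have "norm (u / z\<^sup>2 - 1) = norm (u - z\<^sup>2) / (norm z)\<^sup>2"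
      by (simp add: norm_divide norm_power)
    then show "norm (u / z\<^sup>2 - 1) < 1"
      using that assms by (simp add: dist_norm norm_minus_commute divide_less_eq)
  qed
  then show ?thesis
    by (intro holomorphic_intros) (force simp: complex_nonpos_Reals_iff)+
qed

section \<open>Laurent series without residue\<close>

lemma has_sum_product_complex:
  fixes x :: "'a \<Rightarrow> complex" and y :: "'b \<Rightarrow> complex"
  assumes x: "(x has_sum X) UNIV" and y: "(y has_sum Y) UNIV"
  shows "((\<lambda>(i, j). x i * y j) has_sum X * Y) UNIV"
proof -
  have "(\<lambda>i. norm (x i)) summable_on UNIV" "(\<lambda>j. norm (y j)) summable_on UNIV"
    using x y summable_on_def summable_on_iff_abs_summable_on_complex by blast+
  then have "(\<lambda>(i, j). norm (x i) * norm (y j)) summable_on UNIV \<times> UNIV"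
    by (intro summable_on_SigmaI[where g = "\<lambda>i. norm (x i) * infsum (\<lambda>j. norm (y j)) UNIV"])
       (auto intro: has_sum_cmult_right has_sum_infsum summable_on_cmult_left)
  then have "(\<lambda>(i, j). x i * y j) summable_on UNIV \<times> UNIV"
    by (subst summable_on_iff_abs_summable_on_complex)
       (auto simp: case_prod_unfold norm_mult)
  then have "((\<lambda>(i, j). x i * y j) has_sum X * Y) (UNIV \<times> UNIV)"
    by (intro has_sum_SigmaI[where g = "\<lambda>i. x i * Y"] has_sum_cmult_left x)
       (auto intro: has_sum_cmult_right y)
  then show ?thesis
    by simp
qed

lemma has_sum_group_by_exponent:
  fixes c :: "'j \<Rightarrow> complex" and e :: "'j \<Rightarrow> int"
  assumes z: "z \<noteq> 0" and hs: "((\<lambda>j. c j * z powi e j) has_sum s) UNIV"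
  shows "((\<lambda>k. infsum c {j. e j = k} * z powi k) has_sum s) UNIV"
proof -
  have bij: "bij_betw (\<lambda>j. (e j, j)) UNIV (SIGMA k:UNIV. {j. e j = k})"
    by (auto simp: bij_betw_def inj_on_def image_def)
  have "((\<lambda>(k, j). c j * z powi k) has_sum s) (SIGMA k:UNIV. {j. e j = k})"
    using hs has_sum_reindex_bij_betw[OF bij, of "\<lambda>(k, j). c j * z powi k"] by simp
  then show ?thesis
  proof (rule has_sum_SigmaD)
    fix k :: int
    have "(\<lambda>j. c j * z powi e j) summable_on {j. e j = k}"
      using hs summable_on_subset_banach summable_on_def by blast
    then have "(\<lambda>j. c j * z powi k) summable_on {j. e j = k}"
      by (rule summable_on_cong[THEN iffD1, rotated]) auto
    then have "c summable_on {j. e j = k}"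
      using z summable_on_cmult_left'[of "z powi k" c] by simp
    then show "((\<lambda>j. case (k, j) of (k, j) \<Rightarrow> c j * z powi k) has_sum infsum c {j. e j = k} * z powi k)
        {j. e j = k}"
      by (auto intro: has_sum_cmult_left has_sum_infsum)
  qed
qed

definition residue_free_laurent_on :: "real \<Rightarrow> real \<Rightarrow> (complex \<Rightarrow> complex) \<Rightarrow> bool" where
  "residue_free_laurent_on r1 r2 \<phi> \<longleftrightarrow> (\<exists>\<xi>::int \<Rightarrow> complex. \<xi> (-1) = 0 \<and>
     (\<forall>z. r1 < norm z \<and> norm z < r2 \<longrightarrow> ((\<lambda>k. \<xi> k * z powi k) has_sum \<phi> z) UNIV))"

lemma residue_free_laurent_on_add:
  assumes "residue_free_laurent_on r1 r2 f" and "residue_free_laurent_on r1 r2 g"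
  shows "residue_free_laurent_on r1 r2 (\<lambda>z. f z + g z)"
proof -
  obtain \<xi> \<eta> where "\<xi> (-1) = 0" "\<eta> (-1) = 0"
    and "\<forall>z. r1 < norm z \<and> norm z < r2 \<longrightarrow> ((\<lambda>k. \<xi> k * z powi k) has_sum f z) UNIV"
    and "\<forall>z. r1 < norm z \<and> norm z < r2 \<longrightarrow> ((\<lambda>k. \<eta> k * z powi k) has_sum g z) UNIV"
    using assms unfolding residue_free_laurent_on_def by blast
  then show ?thesis
    unfolding residue_free_laurent_on_def
    by (intro exI[of _ "\<lambda>k. \<xi> k + \<eta> k"]) (auto simp: distrib_right intro: has_sum_add)
qed

lemma residue_free_laurent_on_cong:
  assumes "residue_free_laurent_on r1 r2 f" and "\<And>z. r1 < norm z \<Longrightarrow> norm z < r2 \<Longrightarrow> f z = g z"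
  shows "residue_free_laurent_on r1 r2 g"
  using assms unfolding residue_free_laurent_on_def by metis

lemma residue_free_laurent_onI:
  fixes c :: "'j \<Rightarrow> complex" and e :: "'j \<Rightarrow> int"
  assumes "0 \<le> r1" and "\<And>j. e j \<noteq> -1"
    and "\<And>z. r1 < norm z \<Longrightarrow> norm z < r2 \<Longrightarrow> ((\<lambda>j. c j * z powi e j) has_sum \<phi> z) UNIV"
  shows "residue_free_laurent_on r1 r2 \<phi>"
  unfolding residue_free_laurent_on_def
  using assms by (intro exI[of _ "\<lambda>k. infsum c {j. e j = k}"]) (auto intro: has_sum_group_by_exponent)

text \<open>\<open>W_Airy\<close> indexes coefficients by the exponent of \<open>dz/z\<close>, whence the shift by one.\<close>

lemma W_Airy_if_residue_free_laurent_on: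
  assumes "residue_free_laurent_on r1 r2 \<phi>" and "0 \<le> r1" "r1 < \<epsilon>" "M < r2"
  shows "W_Airy \<epsilon> M \<phi>"
proof -
  obtain \<xi> where \<xi>: "\<xi> (-1) = 0"
    and has_sum: "\<And>z. r1 < norm z \<Longrightarrow> norm z < r2 \<Longrightarrow> ((\<lambda>k. \<xi> k * z powi k) has_sum \<phi> z) UNIV"
    using assms(1) unfolding residue_free_laurent_on_def by blast
  have "((\<lambda>k. \<xi> (k - 1) * z powi k / z) has_sum \<phi> z) UNIV" if "r1 < norm z" "norm z < r2" for z
  proof -
    have "z \<noteq> 0"
      using that assms(2) by auto
    then have "(\<lambda>k. \<xi> (k + 1 - 1) * z powi (k + 1) / z) = (\<lambda>k. \<xi> k * z powi k)"
      by (simp add: fun_eq_iff power_int_add)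
    moreover have "bij_betw (\<lambda>k::int. k + 1) UNIV UNIV"
      by (rule bij_betwI[where g = "\<lambda>k. k - 1"]) auto
    ultimately show ?thesis
      using has_sum[OF that]
        has_sum_reindex_bij_betw[of "\<lambda>k. k + 1" UNIV UNIV "\<lambda>k. \<xi> (k - 1) * z powi k / z"]
      by simp
  qed
  then show ?thesis
    unfolding W_Airy_def using assms(2-4) \<xi>
    by (intro exI[of _ r1] exI[of _ r2] exI[of _ "\<lambda>k. \<xi> (k - 1)"]) auto
qed

lemma residue_free_laurent_on_odd:
  fixes F :: "complex \<Rightarrow> complex"
  assumes F: "F holomorphic_on ball 0 T" and "0 \<le> r1" and "r2\<^sup>2 \<le> T"
  shows "residue_free_laurent_on r1 r2 (\<lambda>z. z * F (z\<^sup>2))"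
proof (rule residue_free_laurent_onI[where c = "\<lambda>n. (deriv ^^ n) F 0 / fact n" and e = "\<lambda>n. int (2 * n + 1)"])
  fix z :: complex
  assume "r1 < norm z" "norm z < r2"
  then have "norm (z\<^sup>2) < T"
    using power_strict_mono[of "norm z" r2 2] assms(3) by (simp add: norm_power)
  from has_sum_cmult_right[OF has_sum_taylor_holomorphic_on_ball[OF F this], of z]
  show "((\<lambda>n. (deriv ^^ n) F 0 / fact n * z powi int (2 * n + 1)) has_sum z * F (z\<^sup>2)) UNIV"
    by (simp only: power_int_of_nat) (simp add: mult_ac flip: power_mult)
qed (use assms in auto)

lemma residue_free_laurent_on_even:
  fixes F C :: "complex \<Rightarrow> complex"
  assumes F: "F holomorphic_on ball 0 T" and C: "C holomorphic_on ball 0 1"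
    and "0 \<le> r1" and "norm a \<le> r1\<^sup>2" and "r2\<^sup>2 \<le> T"
  shows "residue_free_laurent_on r1 r2 (\<lambda>z. z\<^sup>2 * F (z\<^sup>2) * C (a / z\<^sup>2))"
proof (rule residue_free_laurent_onI[where
      c = "\<lambda>(i, j). (deriv ^^ i) F 0 / fact i * ((deriv ^^ j) C 0 / fact j) * a ^ j"
      and e = "\<lambda>(i, j). 2 + 2 * int i - 2 * int j"])
  fix z :: complex
  assume z: "r1 < norm z" "norm z < r2"
  then have "norm (z\<^sup>2) < T"
    using power_strict_mono[of "norm z" r2 2] assms(5) by (simp add: norm_power)
  moreover have "norm a < (norm z)\<^sup>2"
    using power_strict_mono[of r1 "norm z" 2] z assms(3,4) by simp
  then have "norm (a / z\<^sup>2) < 1"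
    using norm_ge_zero[of a] by (simp add: norm_divide norm_power divide_less_eq)
  ultimately have "((\<lambda>(i, j). (deriv ^^ i) F 0 / fact i * (z\<^sup>2) ^ i * ((deriv ^^ j) C 0 / fact j * (a / z\<^sup>2) ^ j))
      has_sum F (z\<^sup>2) * C (a / z\<^sup>2)) UNIV"
    by (intro has_sum_product_complex has_sum_taylor_holomorphic_on_ball[OF F]
        has_sum_taylor_holomorphic_on_ball[OF C])
  from has_sum_cmult_right[OF this, of "z\<^sup>2"]
  have "((\<lambda>(i, j). z\<^sup>2 * ((deriv ^^ i) F 0 / fact i * (z\<^sup>2) ^ i * ((deriv ^^ j) C 0 / fact j * (a / z\<^sup>2) ^ j)))
      has_sum z\<^sup>2 * F (z\<^sup>2) * C (a / z\<^sup>2)) UNIV"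
    by (simp add: case_prod_unfold mult.assoc)
  moreover have "z powi (2 + 2 * int i - 2 * int j) = z\<^sup>2 * (z\<^sup>2) ^ i / (z\<^sup>2) ^ j" for i j
  proof -
    have "z \<noteq> 0"
      using z assms(3) by auto
    then have "z powi (int (2 + 2 * i) - int (2 * j)) = z ^ (2 + 2 * i) / z ^ (2 * j)"
      by (simp only: power_int_diff power_int_of_nat simp_thms)
    then show ?thesis
      by (simp add: power_add power_mult power2_eq_square)
  qed
  ultimately show "((\<lambda>p. (case p of (i, j) \<Rightarrow> (deriv ^^ i) F 0 / fact i * ((deriv ^^ j) C 0 / fact j) * a ^ j)
      * z powi (case p of (i, j) \<Rightarrow> 2 + 2 * int i - 2 * int j)) has_sum z\<^sup>2 * F (z\<^sup>2) * C (a / z\<^sup>2)) UNIV"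
    by (simp only: case_prod_unfold) (simp add: power_divide field_simps)
qed (use assms in \<open>auto simp: case_prod_unfold, presburger\<close>)

section \<open>The exponentiated Lie derivative\<close>

lemma lie_Airy_iterate_pullback:
  fixes F G :: "complex \<Rightarrow> complex"
  assumes G: "G holomorphic_on B" "open B"
    and U: "open U" "0 \<notin> U" "\<And>w. w \<in> U \<Longrightarrow> w\<^sup>2 \<in> B"
    and F: "\<And>w. w \<in> U \<Longrightarrow> F w = 2 * w * G (w\<^sup>2)"
    and w: "w \<in> U"
  shows "(lie_Airy ^^ m) F w = 2 * w * (deriv ^^ m) G (w\<^sup>2)"
  using w
proof (induction m arbitrary: w)
  case 0
  then show ?case
    using F by simp
next
  case (Suc m)
  have "eventually (\<lambda>v. (lie_Airy ^^ m) F v / (2 * v) = (deriv ^^ m) G (v\<^sup>2)) (nhds w)"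
    using eventually_nhds_in_open[OF U(1) Suc.prems]
    by eventually_elim (use Suc.IH U(2) in \<open>auto simp: field_simps\<close>)
  then have "(lie_Airy ^^ Suc m) F w = deriv (\<lambda>v. (deriv ^^ m) G (v\<^sup>2)) w"
    by (simp add: lie_Airy_def deriv_cong_ev)
  also have "\<dots> = deriv ((deriv ^^ m) G) (w\<^sup>2) * (2 * w)"
    by (intro DERIV_imp_deriv DERIV_chain2[where f = "(deriv ^^ m) G"] holomorphic_derivI[of _ B]
          holomorphic_higher_deriv G U(3) Suc.prems)
       (auto intro!: derivative_eq_intros)
  finally show ?case
    by simp
qed

lemma exp_lie_Airy_pullback:
  fixes F G :: "complex \<Rightarrow> complex"
  assumes G: "G holomorphic_on ball (z\<^sup>2) R" and a: "norm a < R"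
    and U: "open U" "z \<in> U" "0 \<notin> U" "\<And>w. w \<in> U \<Longrightarrow> w\<^sup>2 \<in> ball (z\<^sup>2) R"
    and F: "\<And>w. w \<in> U \<Longrightarrow> F w = 2 * w * G (w\<^sup>2)"
  shows "exp_lie_Airy (-a) F z = 2 * z * G (z\<^sup>2 - a)"
proof -
  have "z\<^sup>2 - a \<in> ball (z\<^sup>2) R"
    using a by (simp add: dist_norm)
  from holomorphic_power_series[OF G this]
  have "(\<lambda>n. (deriv ^^ n) G (z\<^sup>2) / fact n * (- a) ^ n) sums G (z\<^sup>2 - a)"
    by simp
  then have sums: "(\<lambda>n. 2 * z * ((deriv ^^ n) G (z\<^sup>2) / fact n * (- a) ^ n)) sums (2 * z * G (z\<^sup>2 - a))"
    by (rule sums_mult)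
  have eq: "(\<lambda>n. 2 * z * ((deriv ^^ n) G (z\<^sup>2) / fact n * (- a) ^ n))
      = (\<lambda>n. (- a) ^ n / fact n * (lie_Airy ^^ n) F z)"
    using lie_Airy_iterate_pullback[OF G open_ball U(1,3,4) F U(2)] by (simp add: fun_eq_iff)
  show ?thesis
    using sums unfolding eq exp_lie_Airy_def by (simp add: sums_iff)
qed

section \<open>A branch of the square root of \<open>z\<^sup>2 - a\<close>\<close>

definition root_shift :: "complex \<Rightarrow> complex \<Rightarrow> complex" where
  "root_shift a z = z * csqrt (1 - a / z\<^sup>2)"

definition root_shift_domain :: "complex \<Rightarrow> real \<Rightarrow> complex set" where
  "root_shift_domain a R = {z. norm a < (norm z)\<^sup>2 \<and> (norm z)\<^sup>2 + norm a < R\<^sup>2}"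

lemma open_root_shift_domain: "open (root_shift_domain a R)"
  unfolding root_shift_domain_def
  by (simp add: Collect_conj_eq open_Int open_Collect_less continuous_intros)

lemma root_shift_domain_nonzero: "z \<in> root_shift_domain a R \<Longrightarrow> z \<noteq> 0"
  using norm_ge_zero[of a] by (auto simp: root_shift_domain_def)

lemma Re_one_minus_div_square_pos:
  assumes "norm a < (norm z)\<^sup>2"
  shows "0 < Re (1 - a / z\<^sup>2)"
proof (rule Re_pos_if_norm_diff_1_less)
  show "norm (1 - a / z\<^sup>2 - 1) < 1"
    using assms norm_ge_zero[of a] by (simp add: norm_divide norm_power divide_less_eq)
qed

lemma root_shift_squared: "z \<noteq> 0 \<Longrightarrow> (root_shift a z)\<^sup>2 = z\<^sup>2 - a"
  by (simp add: root_shift_def power_mult_distrib field_simps)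

lemma root_shift_nonzero: "norm a < (norm z)\<^sup>2 \<Longrightarrow> root_shift a z \<noteq> 0"
  using Re_one_minus_div_square_pos[of a z] norm_ge_zero[of a] by (auto simp: root_shift_def)

lemma norm_root_shift_less:
  assumes "z \<in> root_shift_domain a R" and "0 < R"
  shows "norm (root_shift a z) < R"
proof -
  have "(norm (root_shift a z))\<^sup>2 = norm (z\<^sup>2 - a)"
    using root_shift_squared[OF root_shift_domain_nonzero[OF assms(1)]] by (metis norm_power)
  also have "\<dots> \<le> (norm z)\<^sup>2 + norm a"
    using norm_triangle_ineq4[of "z\<^sup>2" a] by (simp add: norm_power)
  also have "\<dots> < R\<^sup>2"
    using assms(1) by (simp add: root_shift_domain_def)
  finally show ?thesis
    using assms(2) by (simp add: power_less_imp_less_base)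
qed

lemma has_field_derivative_root_shift:
  assumes z: "z \<in> root_shift_domain a R"
  shows "(root_shift a has_field_derivative z / root_shift a z) (at z)"
proof -
  have "1 - a / w\<^sup>2 \<notin> \<real>\<^sub>\<le>\<^sub>0" if "w \<in> root_shift_domain a R" for w
    using Re_one_minus_div_square_pos[of a w] that
    by (auto simp: root_shift_domain_def complex_nonpos_Reals_iff)
  then have "root_shift a holomorphic_on root_shift_domain a R"
    unfolding root_shift_def[abs_def] using root_shift_domain_nonzero
    by (intro holomorphic_intros) auto
  then have d: "(root_shift a has_field_derivative deriv (root_shift a) z) (at z)"
    by (rule holomorphic_derivI[OF _ open_root_shift_domain z])
  have square: "((\<lambda>s. s\<^sup>2) has_field_derivative 2 * root_shift a z) (at (root_shift a z))"
    by (auto intro!: derivative_eq_intros)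
  have "((\<lambda>w. (root_shift a w)\<^sup>2) has_field_derivative 2 * z) (at z)"
    by (rule has_field_derivative_transform_within_open[of "\<lambda>w. w\<^sup>2 - a" _ _ "root_shift_domain a R"])
       (auto intro!: derivative_eq_intros simp: z open_root_shift_domain root_shift_squared
         root_shift_domain_nonzero)
  moreover have "((\<lambda>w. (root_shift a w)\<^sup>2) has_field_derivative 2 * root_shift a z * deriv (root_shift a) z) (at z)"
    using DERIV_chain2[OF square d] by simp
  ultimately have "2 * root_shift a z * deriv (root_shift a) z = 2 * z"
    using DERIV_unique by blast
  moreover have "root_shift a z \<noteq> 0"
    using root_shift_nonzero[of a z] z by (simp add: root_shift_domain_def)
  ultimately have "deriv (root_shift a) z = z / root_shift a z"
    by (simp add: field_simps)
  then show ?thesis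
    using d by simp
qed

lemma exp_lie_Airy_root_shift:
  fixes Y :: "complex \<Rightarrow> complex"
  assumes Y: "Y holomorphic_on ball 0 R" and R: "0 < R" and z: "z \<in> root_shift_domain a R"
  shows "exp_lie_Airy (-a) (\<lambda>w. 2 * w * Y w) z = 2 * z * Y (root_shift a z)"
proof -
  have z0: "z \<noteq> 0"
    using z by (rule root_shift_domain_nonzero)
  define r where "r = min ((norm z)\<^sup>2) (R\<^sup>2 - (norm z)\<^sup>2)"
  define B where "B = ball (z\<^sup>2) r"
  \<comment> \<open>the branch of the square root near \<open>z\<^sup>2\<close> taking the value \<open>z\<close> there\<close>
  define \<sigma> where "\<sigma> u = z * csqrt (u / z\<^sup>2)" for u
  define U where "U = (\<lambda>w. w\<^sup>2) -` B \<inter> {w. 0 < Re (w / z)}"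
  have \<sigma>_hol: "\<sigma> holomorphic_on B"
    using holomorphic_on_csqrt_div[OF z0] unfolding \<sigma>_def[abs_def] B_def r_def
    by (rule holomorphic_on_subset) auto
  have "norm (\<sigma> u) < R" if "u \<in> B" for u
  proof -
    have "(\<sigma> u)\<^sup>2 = u"
      using z0 by (simp add: \<sigma>_def power_mult_distrib)
    then have "(norm (\<sigma> u))\<^sup>2 = norm u"
      by (metis norm_power)
    also have "\<dots> \<le> norm (z\<^sup>2) + norm (u - z\<^sup>2)"
      by (metis add.commute diff_add_cancel norm_triangle_ineq)
    also have "\<dots> < R\<^sup>2"
      using that by (simp add: B_def r_def dist_norm norm_minus_commute norm_power)
    finally show ?thesis
      using R by (simp add: power_less_imp_less_base)
  qed
  then have G_hol: "(\<lambda>u. Y (\<sigma> u)) holomorphic_on B"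
    using holomorphic_on_compose_gen[OF \<sigma>_hol Y] by (auto simp: o_def image_subset_iff)
  have "\<sigma> (w\<^sup>2) = w" if "w \<in> U" for w
  proof -
    have "csqrt (w\<^sup>2 / z\<^sup>2) = w / z"
      using that by (simp add: U_def csqrt_square flip: power_divide)
    then show ?thesis
      using z0 by (simp add: \<sigma>_def)
  qed
  moreover have "open U"
    unfolding U_def B_def
    by (intro open_Int open_vimage open_Collect_less continuous_intros) (use z0 in auto)
  moreover have "norm a < r"
    using z by (simp add: r_def root_shift_domain_def)
  moreover have "z \<in> U" "0 \<notin> U"
    using z0 \<open>norm a < r\<close> by (auto simp: U_def B_def intro: le_less_trans[OF norm_ge_zero])
  ultimately have "exp_lie_Airy (-a) (\<lambda>w. 2 * w * Y w) z = 2 * z * Y (\<sigma> (z\<^sup>2 - a))"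
    using exp_lie_Airy_pullback[OF G_hol[unfolded B_def], of a U "\<lambda>w. 2 * w * Y w"]
    by (auto simp: U_def B_def)
  also have "\<sigma> (z\<^sup>2 - a) = root_shift a z"
    using z0 by (simp add: \<sigma>_def root_shift_def diff_divide_distrib)
  finally show ?thesis .
qed

section \<open>The form \<Phi>(t)\<close>

lemma Phi_Airy_root_shift:
  fixes b :: "nat \<Rightarrow> complex"
  assumes b: "\<And>z. norm z < R \<Longrightarrow> summable (\<lambda>k. b k * z ^ k)" and R: "0 < R"
    and z: "z \<in> root_shift_domain a R"
  shows "Phi_Airy a b z = 2 * z\<^sup>2 - 2 * z * (\<Sum>k. b k * root_shift a z ^ k)"
  unfolding Phi_Airy_def
  using exp_lie_Airy_root_shift[OF holomorphic_on_ball_powser[OF b] R z] by simp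

lemma form_Airy_Phi_Airy_eq:
  fixes b :: "nat \<Rightarrow> complex"
  assumes b: "\<And>z. norm z < R \<Longrightarrow> summable (\<lambda>k. b k * z ^ k)" and R: "0 < R"
    and z: "z \<in> root_shift_domain a R"
  defines "s \<equiv> root_shift a z"
  shows "form_Airy (Phi_Airy a b) m n z = (\<Sum>k. b k * s ^ k) ^ m * (s\<^sup>2 + a) ^ n * (2 * s) * (z / s)"
proof -
  have z0: "z \<noteq> 0" and s0: "s \<noteq> 0"
    using z root_shift_nonzero[of a z] by (auto simp: s_def root_shift_domain_def root_shift_domain_nonzero)
  have "z - Phi_Airy a b z / (2 * z) = (\<Sum>k. b k * s ^ k)"
    using Phi_Airy_root_shift[OF b R z] z0 by (simp add: s_def field_simps power2_eq_square)
  moreover have "s\<^sup>2 + a = z\<^sup>2"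
    using root_shift_squared[OF z0, of a] by (simp add: s_def)
  ultimately show ?thesis
    unfolding form_Airy_def using s0 by (simp add: power_mult)
qed

lemma contour_integral_form_Airy_Phi_Airy:
  fixes b :: "nat \<Rightarrow> complex"
  assumes b: "\<And>z. norm z < R \<Longrightarrow> summable (\<lambda>k. b k * z ^ k)" and R: "0 < R"
    and r: "0 < r" "norm a < r\<^sup>2" "r\<^sup>2 + norm a < R\<^sup>2"
  shows "contour_integral (circlepath 0 r) (form_Airy (Phi_Airy a b) m n) = 0"
proof -
  \<comment> \<open>the form pulled back along \<open>s = root_shift a z\<close> is \<open>H(s) ds\<close>, which has a primitive\<close>
  define H where "H s = (\<Sum>k. b k * s ^ k) ^ m * (s\<^sup>2 + a) ^ n * (2 * s)" for s
  have "H holomorphic_on ball 0 R"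
    unfolding H_def[abs_def] using holomorphic_on_ball_powser[OF b] by (intro holomorphic_intros)
  then obtain P where P: "\<And>s. s \<in> ball 0 R \<Longrightarrow> (P has_field_derivative H s) (at s)"
    using holomorphic_convex_primitive'[OF convex_ball open_ball] at_within_open[OF _ open_ball] by metis
  have "((\<lambda>z. P (root_shift a z)) has_field_derivative form_Airy (Phi_Airy a b) m n z)
      (at z within root_shift_domain a R)" if z: "z \<in> root_shift_domain a R" for z
  proof -
    have "root_shift a z \<in> ball 0 R"
      using norm_root_shift_less[OF z R] by simp
    from DERIV_chain2[OF P[OF this] has_field_derivative_root_shift[OF z]]
    show ?thesis
      using form_Airy_Phi_Airy_eq[OF b R z] by (simp add: H_def has_field_derivative_at_within)
  qed
  moreover have "path_image (circlepath 0 r) \<subseteq> root_shift_domain a R"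
    using r by (auto simp: root_shift_domain_def)
  ultimately have "(form_Airy (Phi_Airy a b) m n has_contour_integral 0) (circlepath 0 r)"
    using contour_integral_primitive[OF _ valid_path_circlepath] by fastforce
  then show ?thesis
    by (rule contour_integral_unique)
qed

lemma Phi_Airy_even_odd:
  fixes b :: "nat \<Rightarrow> complex"
  assumes b: "\<And>z. norm z < R \<Longrightarrow> summable (\<lambda>k. b k * z ^ k)" and R: "0 < R"
    and z: "z \<in> root_shift_domain a R"
  shows "Phi_Airy a b z = 2 * z\<^sup>2 - 2 * z * powser_even b (z\<^sup>2 - a)
    - 2 * z\<^sup>2 * powser_odd b (z\<^sup>2 - a) * csqrt (1 - a / z\<^sup>2)"
proof -
  have "z \<noteq> 0"
    using z by (rule root_shift_domain_nonzero)
  then have sq: "(root_shift a z)\<^sup>2 = z\<^sup>2 - a"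
    by (rule root_shift_squared)
  have "Phi_Airy a b z
      = 2 * z\<^sup>2 - 2 * z * (powser_even b (z\<^sup>2 - a) + root_shift a z * powser_odd b (z\<^sup>2 - a))"
    using Phi_Airy_root_shift[OF b R z] powser_even_odd_split[OF b norm_root_shift_less[OF z R]]
    unfolding sq by simp
  also have "\<dots> = 2 * z\<^sup>2 - 2 * z * powser_even b (z\<^sup>2 - a) - 2 * (z * root_shift a z) * powser_odd b (z\<^sup>2 - a)"
    by (simp add: algebra_simps)
  also have "z * root_shift a z = z\<^sup>2 * csqrt (1 - a / z\<^sup>2)"
    by (simp add: root_shift_def power2_eq_square)
  finally show ?thesis
    by (simp add: algebra_simps)
qed

lemma residue_free_laurent_on_Phi_Airy:
  fixes b :: "nat \<Rightarrow> complex"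
  assumes b: "\<And>z. norm z < R \<Longrightarrow> summable (\<lambda>k. b k * z ^ k)" and R: "0 < R"
    and r: "0 \<le> r1" "norm a \<le> r1\<^sup>2" "r2\<^sup>2 + norm a \<le> R\<^sup>2"
  shows "residue_free_laurent_on r1 r2 (Phi_Airy a b)"
proof -
  define T where "T = R\<^sup>2 - norm a"
  have T: "r2\<^sup>2 \<le> T"
    using r(3) by (simp add: T_def)
  have even: "(\<lambda>u. -2 * powser_even b (u - a)) holomorphic_on ball 0 T"
    unfolding T_def
    by (intro holomorphic_on_mult holomorphic_on_const holomorphic_on_ball_translate
        holomorphic_on_powser_even[OF b R])
  have odd: "(\<lambda>u. -2 * powser_odd b (u - a)) holomorphic_on ball 0 T"
    unfolding T_def
    by (intro holomorphic_on_mult holomorphic_on_const holomorphic_on_ball_translate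
        holomorphic_on_powser_odd[OF b R])
  have "residue_free_laurent_on r1 r2 (\<lambda>z. (z\<^sup>2 * 2 * 1 + z * (-2 * powser_even b (z\<^sup>2 - a)))
      + z\<^sup>2 * (-2 * powser_odd b (z\<^sup>2 - a)) * csqrt (1 - a / z\<^sup>2))"
    by (intro residue_free_laurent_on_add residue_free_laurent_on_even[OF _ _ r(1,2) T]
        residue_free_laurent_on_odd[OF even r(1) T] odd holomorphic_on_csqrt_one_minus)
       (auto intro: holomorphic_intros)
  then show ?thesis
  proof (rule residue_free_laurent_on_cong)
    fix z :: complex
    assume "r1 < norm z" "norm z < r2"
    then have "z \<in> root_shift_domain a R"
      using r power_strict_mono[of r1 "norm z" 2] power_strict_mono[of "norm z" r2 2]
      by (auto simp: root_shift_domain_def)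
    then show "z\<^sup>2 * 2 * 1 + z * (-2 * powser_even b (z\<^sup>2 - a))
        + z\<^sup>2 * (-2 * powser_odd b (z\<^sup>2 - a)) * csqrt (1 - a / z\<^sup>2) = Phi_Airy a b z"
      using Phi_Airy_even_odd[OF b R] by (simp add: algebra_simps)
  qed
qed

theorem proposition2p44:
  fixes \<epsilon> M Mbar :: real and a :: complex and b :: "nat \<Rightarrow> complex"
  assumes "0 < \<epsilon>" and "\<epsilon> < M" and "M < Mbar"
    and "\<And>z. norm z < Mbar \<Longrightarrow> summable (\<lambda>k. b k * z ^ k)"
    and "norm a < min (Mbar\<^sup>2 - M\<^sup>2) (\<epsilon>\<^sup>2)"
  shows "W_Airy \<epsilon> M (Phi_Airy a b)
    \<and> (\<forall>m n. res_Airy \<epsilon> M (form_Airy (Phi_Airy a b) m n) = 0)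
    \<and> (\<forall>i\<ge>1. H_Airy \<epsilon> M i (Phi_Airy a b) = 0)"
proof -
  have Mbar: "0 < Mbar"
    using assms(1-3) by linarith
  have a: "norm a < \<epsilon>\<^sup>2" "norm a + M\<^sup>2 < Mbar\<^sup>2"
    using assms(5) by auto
  have "0 \<le> Mbar\<^sup>2 - norm a"
    using a(2) zero_le_power2[of M] by linarith
  moreover have "sqrt (norm a) < \<epsilon>" "M < sqrt (Mbar\<^sup>2 - norm a)"
    using a assms(1,2) real_sqrt_less_iff[of "norm a" "\<epsilon>\<^sup>2"] real_less_rsqrt[of M "Mbar\<^sup>2 - norm a"]
    by auto
  ultimately have W: "W_Airy \<epsilon> M (Phi_Airy a b)"
    by (intro W_Airy_if_residue_free_laurent_on residue_free_laurent_on_Phi_Airy[OF assms(4) Mbar]) auto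
  define r where "r = (\<epsilon> + M) / 2"
  have "\<epsilon> < r" "r < M"
    using assms(2) by (auto simp: r_def)
  then have "norm a < r\<^sup>2" "r\<^sup>2 + norm a < Mbar\<^sup>2"
    using a assms(1) power_strict_mono[of \<epsilon> r 2] power_strict_mono[of r M 2] by auto
  then have "res_Airy \<epsilon> M (form_Airy (Phi_Airy a b) m n) = 0" for m n
    unfolding res_Airy_def r_def[symmetric]
    using contour_integral_form_Airy_Phi_Airy[OF assms(4) Mbar] assms(1) \<open>\<epsilon> < r\<close> by simp
  then show ?thesis
    using W by (simp add: H_Airy_def)
qed

end
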